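(* Let $r\ge 2$ and $s_r\ge\cdots\ge s_1\ge 2$ be integers, $\alpha>0$ a real number, $s:=s_1+\cdots+s_r$, and $\mathbb{K}:=K^r_{s_1,\ldots,s_r}$. There is $n_0$ such that for all $n\ge n_0$ the following holds. Suppose $\mathcal{H}$ is an $m$ by $n$ semibipartite $r$-graph on $V_1,V_2$ such that (i) $m \le \frac{\alpha n}{8(s-s_1)}$, (ii) $d_{\mathcal{H}}(v) \ge \alpha n^{r-1}$ for every $v\in V_1$, and (iii) the set $L := \left\{v\in V_1 : d_{\mathcal{H}}(v) \ge \binom{n}{r-1} - \frac{\alpha n^{r-1}}{2s_1}\right\}$ has size at least $\min\left\{\frac{5s_1(s_1-1)}{\alpha},\ \frac{s_1-1}{s_1}m\right\}$. Then $\mathcal{H}$ contains $\lfloor m/s_1\rfloor$ pairwise vertex-disjoint ordered copies of $\mathbb{K}$.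
   Context: An $r$-graph is a set of $r$-element subsets (edges) of a finite vertex set; $d_{\mathcal{H}}(v)$ is the number of edges containing $v$. An $m$ by $n$ semibipartite $r$-graph on $V_1,V_2$ has vertex set $V_1\cup V_2$ (disjoint), $|V_1|=m$, $|V_2|=n$, and every edge contains exactly one vertex of $V_1$. $K^r_{s_1,\ldots,s_r}$ is the complete $r$-partite $r$-graph with parts $W_1,\ldots,W_r$ of sizes $s_1,\ldots,s_r$. An ordered copy of it in a semibipartite $r$-graph on $V_1,V_2$ is a copy with $W_1\subseteq V_1$ and $W_2,\ldots,W_r\subseteq V_2$. *)

theory Defs
  imports Complex_Main
begin

definition hdeg :: "'a set set \<Rightarrow> 'a \<Rightarrow> nat" where
  "hdeg H v = card {e \<in> H. v \<in> e}"

definition semibipartite :: "nat \<Rightarrow> 'a set set \<Rightarrow> 'a set \<Rightarrow> 'a set \<Rightarrow> bool" where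
  "semibipartite r H V1 V2 \<longleftrightarrow>
     finite V1 \<and> finite V2 \<and> V1 \<inter> V2 = {} \<and>
     (\<forall>e\<in>H. e \<subseteq> V1 \<union> V2 \<and> card e = r \<and> card (e \<inter> V1) = 1)"

definition ordered_copy ::
  "nat \<Rightarrow> (nat \<Rightarrow> nat) \<Rightarrow> 'a set set \<Rightarrow> 'a set \<Rightarrow> 'a set \<Rightarrow> (nat \<Rightarrow> 'a set) \<Rightarrow> bool" where
  "ordered_copy r s H V1 V2 W \<longleftrightarrow>
     (\<forall>i\<in>{1..r}. card (W i) = s i) \<and>
     W 1 \<subseteq> V1 \<and> (\<forall>i\<in>{2..r}. W i \<subseteq> V2) \<and>
     (\<forall>i\<in>{1..r}. \<forall>j\<in>{1..r}. i \<noteq> j \<longrightarrow> W i \<inter> W j = {}) \<and>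
     (\<forall>f. (\<forall>i\<in>{1..r}. f i \<in> W i) \<longrightarrow> f ` {1..r} \<in> H)"

end

theory Submission
  imports Defs
begin

text \<open>The copies are built greedily. The \<open>V1\<close>-part \<open>S\<close> of the next copy is chosen among
  the unused vertices of \<open>V1\<close> so that its common link, the family of unused \<open>(r-1)\<close>-subsets
  \<open>g\<close> of \<open>V2\<close> with \<open>insert v g \<in> H\<close> for all \<open>v \<in> S\<close>, has at least \<open>\<beta> n^(r-1)\<close> members;
  the supersaturated form of Erdos' theorem for complete \<open>(r-1)\<close>-partite \<open>(r-1)\<close>-graphs
  then yields the remaining parts inside this family. Since few vertices of \<open>V2\<close> are used,
  every vertex of \<open>V1\<close> keeps a link of size about \<open>\<alpha> n^(r-1)\<close>. A suitable \<open>S\<close> is found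
  either by pigeonhole inside a pool of \<open>\<lceil>4 s\<^sub>1/\<alpha>\<rceil>\<close> unused vertices outside \<open>L\<close>, or as
  \<open>s\<^sub>1 - 1\<close> vertices of \<open>L\<close> plus one further vertex, because vertices of \<open>L\<close> miss
  few \<open>(r-1)\<close>-sets. Hypothesis (iii) guarantees that whenever no pool is left, enough
  vertices of \<open>L\<close> remain for all copies still to be built.\<close>

lemma card_subsets_le_power:
  assumes "finite X" "card X \<le> n"
  shows "card {g. g \<subseteq> X \<and> card g = k} \<le> n ^ k"
proof -
  have "card X choose k \<le> card X ^ k"
    by (cases "k \<le> card X") (auto simp: binomial_le_pow binomial_eq_0)
  also have "\<dots> \<le> n ^ k" using assms(2) by (rule power_mono) simp
  finally show ?thesis using n_subsets[OF assms(1)] by simp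
qed

lemma card_subsets_containing_le_power:
  assumes "finite X" "card X \<le> n"
  shows "card {g. g \<subseteq> X \<and> card g = Suc k \<and> u \<in> g} \<le> n ^ k"
proof -
  have "card {g. g \<subseteq> X \<and> card g = Suc k \<and> u \<in> g} \<le> card {h. h \<subseteq> X \<and> card h = k}"
  proof (rule card_inj_on_le)
    show "inj_on (\<lambda>g. g - {u}) {g. g \<subseteq> X \<and> card g = Suc k \<and> u \<in> g}"
      by (rule inj_onI) (metis (no_types, lifting) insert_Diff mem_Collect_eq)
    show "(\<lambda>g. g - {u}) ` {g. g \<subseteq> X \<and> card g = Suc k \<and> u \<in> g} \<subseteq> {h. h \<subseteq> X \<and> card h = k}"
      using assms(1) by (auto dest: finite_subset)
    show "finite {h. h \<subseteq> X \<and> card h = k}"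
      using assms(1) by (auto intro: finite_subset[of _ "Pow X"])
  qed
  also have "\<dots> \<le> n ^ k" using assms by (rule card_subsets_le_power)
  finally show ?thesis .
qed

lemma sum_card_filter_swap:
  assumes "finite A" "finite B"
  shows "(\<Sum>a\<in>A. card {b\<in>B. R a b}) = (\<Sum>b\<in>B. card {a\<in>A. R a b})"
  using sum.swap_restrict[OF assms, of "\<lambda>_ _. 1::nat" R] by simp

lemma ex_ge_average:
  fixes f :: "'a \<Rightarrow> real"
  assumes "finite A" "A \<noteq> {}"
  shows "\<exists>x\<in>A. sum f A \<le> real (card A) * f x"
proof -
  have "Max (f ` A) \<in> f ` A" using assms by simp
  then obtain x where x: "x \<in> A" "f x = Max (f ` A)" by force
  then have "sum f A \<le> real (card A) * f x"
    using sum_bounded_above[of A f "f x"] assms(1) by simp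
  with x show ?thesis by blast
qed

lemma pigeonhole_fibre:
  assumes "finite A" "finite B" "f ` A \<subseteq> B" "A \<noteq> {}"
  shows "\<exists>y\<in>B. real (card A) \<le> real (card B) * real (card {x\<in>A. f x = y})"
proof -
  have "{y\<in>B. f x = y} = {f x}" if "x \<in> A" for x
    using that assms(3) by auto
  then have "card A = (\<Sum>x\<in>A. card {y\<in>B. f x = y})"
    by simp
  also have "\<dots> = (\<Sum>y\<in>B. card {x\<in>A. f x = y})"
    using assms(1,2) by (rule sum_card_filter_swap)
  finally have "real (card A) = (\<Sum>y\<in>B. real (card {x\<in>A. f x = y}))"
    by simp
  moreover have "B \<noteq> {}" using assms(3,4) by auto
  ultimately show ?thesis
    using ex_ge_average[OF assms(2), of "\<lambda>y. real (card {x\<in>A. f x = y})"] by simp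
qed

lemma sum_le_threshold_split:
  fixes c :: "'a \<Rightarrow> real"
  assumes "finite K" "\<And>g. g \<in> K \<Longrightarrow> c g \<le> a"
    and "\<And>g. g \<in> K \<Longrightarrow> \<not> P g \<Longrightarrow> c g \<le> b" "0 \<le> b"
  shows "sum c K \<le> real (card {g\<in>K. P g}) * a + real (card K) * b"
proof -
  have "sum c K = sum c {g\<in>K. P g} + sum c {g\<in>K. \<not> P g}"
  proof -
    have "K = {g\<in>K. P g} \<union> {g\<in>K. \<not> P g}" by blast
    then show ?thesis
      using sum.union_disjoint[of "{g\<in>K. P g}" "{g\<in>K. \<not> P g}" c] assms(1) by force
  qed
  also have "sum c {g\<in>K. P g} \<le> real (card {g\<in>K. P g}) * a"
    using sum_bounded_above[of "{g\<in>K. P g}" c a] assms(2) by auto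
  also have "sum c {g\<in>K. \<not> P g} \<le> real (card {g\<in>K. \<not> P g}) * b"
    using sum_bounded_above[of "{g\<in>K. \<not> P g}" c b] assms(3) by auto
  also have "\<dots> \<le> real (card K) * b"
    using assms(1,4) card_mono[OF assms(1), of "{g\<in>K. \<not> P g}"] by (intro mult_right_mono) auto
  finally show ?thesis by simp
qed

lemma disjoint_fun_upd_fresh:
  assumes "\<forall>i<j. \<forall>i'<j. i \<noteq> i' \<longrightarrow> A i \<inter> A i' = {}" "\<forall>i<j. A i \<subseteq> U" "B \<inter> U = {}"
  shows "\<forall>i<Suc j. \<forall>i'<Suc j. i \<noteq> i' \<longrightarrow> (A(j := B)) i \<inter> (A(j := B)) i' = {}"
  using assms by (auto simp: less_Suc_eq; blast)

definition partite_copy :: "'i set \<Rightarrow> ('i \<Rightarrow> nat) \<Rightarrow> 'a set \<Rightarrow> 'a set set \<Rightarrow> ('i \<Rightarrow> 'a set) \<Rightarrow> bool"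
  where "partite_copy I t X F W \<longleftrightarrow>
    (\<forall>i\<in>I. W i \<subseteq> X \<and> card (W i) = t i) \<and>
    (\<forall>i\<in>I. \<forall>j\<in>I. i \<noteq> j \<longrightarrow> W i \<inter> W j = {}) \<and>
    (\<forall>f. (\<forall>i\<in>I. f i \<in> W i) \<longrightarrow> f ` I \<in> F)"

lemma partite_copy_insert:
  assumes W: "partite_copy I t (X - T) F' W" and "i \<notin> I" "T \<subseteq> X" "card T = t i"
    and F': "\<And>g x. g \<in> F' \<Longrightarrow> x \<in> T \<Longrightarrow> insert x g \<in> F"
  shows "partite_copy (insert i I) t X F (W(i := T))"
  unfolding partite_copy_def
proof (intro conjI ballI allI impI)
  fix j assume "j \<in> insert i I"
  then show "(W(i := T)) j \<subseteq> X" "card ((W(i := T)) j) = t j"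
    using W assms(3,4) by (auto simp: partite_copy_def)
next
  fix j j' assume "j \<in> insert i I" "j' \<in> insert i I" "j \<noteq> j'"
  then show "(W(i := T)) j \<inter> (W(i := T)) j' = {}"
    using W \<open>i \<notin> I\<close> unfolding partite_copy_def by (auto 4 3)
next
  fix f assume f: "\<forall>j\<in>insert i I. f j \<in> (W(i := T)) j"
  then have "f ` I \<in> F'"
    using W \<open>i \<notin> I\<close> unfolding partite_copy_def by (metis fun_upd_other insertCI)
  moreover have "f i \<in> T" using f by simp
  ultimately show "f ` insert i I \<in> F" using F' by simp
qed

definition link :: "'a set set \<Rightarrow> 'a set \<Rightarrow> 'a set"
  where "link F g = {x. x \<notin> g \<and> insert x g \<in> F}"

lemma link_subset:
  assumes "F \<subseteq> {e. e \<subseteq> X \<and> card e = k}"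
  shows "link F g \<subseteq> X"
  using assms by (auto simp: link_def)

lemma card_sets_with_large_link_ge:
  assumes X: "finite X" "card X \<le> n" and "1 \<le> n" "0 \<le> \<beta>"
    and F: "F \<subseteq> {e. e \<subseteq> X \<and> card e = Suc k}" and dense: "\<beta> * real n ^ Suc k \<le> real (card F)"
  shows "\<beta> / 2 * real n ^ k
    \<le> real (card {g. g \<subseteq> X \<and> card g = k \<and> \<beta> * real n / 2 \<le> real (card (link F g))})"
    (is "_ \<le> real (card ?G)")
proof -
  define K where "K = {g. g \<subseteq> X \<and> card g = k}"
  have finK: "finite K" unfolding K_def using X(1) by (auto intro: finite_subset[of _ "Pow X"])
  have G_eq: "?G = {g\<in>K. \<beta> * real n / 2 \<le> real (card (link F g))}"
    by (auto simp: K_def)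
  have link_X: "link F g \<subseteq> X" for g using F by (rule link_subset)
  then have fin_link: "finite (link F g)" for g using X(1) finite_subset by blast
  have "F \<subseteq> (\<lambda>(g, x). insert x g) ` (SIGMA g:K. link F g)"
  proof
    fix e assume e: "e \<in> F"
    then have e': "e \<subseteq> X" "card e = Suc k" using F by auto
    then obtain x where x: "x \<in> e" by fastforce
    have "e - {x} \<in> K" "x \<in> link F (e - {x})"
      using e e' x X(1) by (auto simp: K_def link_def insert_absorb finite_subset)
    then show "e \<in> (\<lambda>(g, x). insert x g) ` (SIGMA g:K. link F g)"
      using x by (intro image_eqI[where x="(e - {x}, x)"]) auto
  qed
  then have "card F \<le> card (SIGMA g:K. link F g)"
    using finK fin_link by (meson card_image_le card_mono finite_SigmaI finite_imageI le_trans)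
  also have "\<dots> = (\<Sum>g\<in>K. card (link F g))" using finK fin_link by simp
  finally have "real (card F) \<le> (\<Sum>g\<in>K. real (card (link F g)))"
    by (metis of_nat_le_iff of_nat_sum)
  also have "\<dots> \<le> real (card ?G) * real n + real (card K) * (\<beta> * real n / 2)"
    unfolding G_eq
  proof (rule sum_le_threshold_split[OF finK])
    fix g show "real (card (link F g)) \<le> real n"
      using card_mono[OF X(1) link_X, of g] X(2) by simp
  qed (use \<open>0 \<le> \<beta>\<close> in auto)
  also have "\<dots> \<le> real (card ?G) * real n + real n ^ k * (\<beta> * real n / 2)"
    using card_subsets_le_power[OF X, of k] \<open>0 \<le> \<beta>\<close> unfolding K_def
    by (intro add_left_mono mult_right_mono) (simp_all add: of_nat_le_iff[symmetric])
  finally have "(\<beta> / 2 * real n ^ k) * real n \<le> real (card ?G) * real n"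
    using dense by (simp add: algebra_simps)
  then show ?thesis using \<open>1 \<le> n\<close> by simp
qed

lemma ex_element_in_many_sets:
  fixes d :: "'b \<Rightarrow> 'a set"
  assumes A: "finite A" "card A \<le> n" and "1 \<le> n" "0 < c" and G: "finite G" "G \<noteq> {}"
    and d: "\<forall>g\<in>G. c * real n \<le> real (card {x\<in>A. x \<in> d g})"
  shows "\<exists>x\<in>A. c * real (card G) \<le> real (card {g\<in>G. x \<in> d g})"
proof -
  have "real (card G) * (c * real n) \<le> (\<Sum>g\<in>G. real (card {x\<in>A. x \<in> d g}))"
    using sum_bounded_below[of G "c * real n" "\<lambda>g. real (card {x\<in>A. x \<in> d g})"] d
    by (simp add: mult.commute)
  also have "\<dots> = (\<Sum>x\<in>A. real (card {g\<in>G. x \<in> d g}))"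
    by (simp only: of_nat_sum[symmetric] sum_card_filter_swap[OF G(1) A(1)])
  finally have avg: "real (card G) * (c * real n) \<le> (\<Sum>x\<in>A. real (card {g\<in>G. x \<in> d g}))" .
  have "0 < real (card G) * (c * real n)" using G \<open>0 < c\<close> \<open>1 \<le> n\<close> by (simp add: card_gt_0_iff)
  then have "A \<noteq> {}" using avg by auto
  then obtain x where x: "x \<in> A"
    "(\<Sum>x\<in>A. real (card {g\<in>G. x \<in> d g})) \<le> real (card A) * real (card {g\<in>G. x \<in> d g})"
    using ex_ge_average[OF A(1)] by blast
  have "real (card A) * real (card {g\<in>G. x \<in> d g}) \<le> real n * real (card {g\<in>G. x \<in> d g})"
    using A(2) by (intro mult_right_mono) auto
  then have "c * real (card G) * real n \<le> real (card {g\<in>G. x \<in> d g}) * real n"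
    using avg x(2) by (simp add: algebra_simps)
  then show ?thesis using x(1) \<open>1 \<le> n\<close> by auto
qed

lemma ex_subset_in_many_sets:
  fixes d :: "'b \<Rightarrow> 'a set"
  assumes X: "finite X" "card X \<le> n" and "1 \<le> n" "0 < \<delta>"
    and G: "finite G" "G \<noteq> {}"
    and d: "\<forall>g\<in>G. d g \<subseteq> X \<and> \<delta> * real n \<le> real (card (d g))"
    and j: "real j \<le> \<delta> * real n / 2"
  shows "\<exists>T\<subseteq>X. card T = j \<and> (\<delta> / 2) ^ j * real (card G) \<le> real (card {g\<in>G. T \<subseteq> d g})"
  using j
proof (induction j)
  case 0
  show ?case by (intro exI[of _ "{}"]) auto
next
  case (Suc j)
  then have "real j \<le> \<delta> * real n / 2" by simp
  then obtain T where T: "T \<subseteq> X" "card T = j"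
    and many: "(\<delta> / 2) ^ j * real (card G) \<le> real (card {g\<in>G. T \<subseteq> d g})"
    using Suc.IH by blast
  define G' where "G' = {g\<in>G. T \<subseteq> d g}"
  have "0 < (\<delta> / 2) ^ j * real (card G)" using \<open>0 < \<delta>\<close> G by (simp add: card_gt_0_iff)
  then have "0 < card G'" using many by (simp add: G'_def)
  then have "G' \<noteq> {}" by auto
  moreover have "\<delta> / 2 * real n \<le> real (card {x\<in>X - T. x \<in> d g})" if "g \<in> G'" for g
  proof -
    have "g \<in> G" "{x\<in>X - T. x \<in> d g} = d g - T" using that d by (auto simp: G'_def)
    moreover have "card (d g) \<le> card (d g - T) + card T"
    proof -
      have "finite (d g \<union> T)" using d T(1) X(1) \<open>g \<in> G\<close> by (meson finite_UnI finite_subset)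
      then have "card (d g) \<le> card ((d g - T) \<union> T)" by (intro card_mono) auto
      then show ?thesis using card_Un_le[of "d g - T" T] by linarith
    qed
    moreover have "\<delta> * real n \<le> real (card (d g))" using d \<open>g \<in> G\<close> by blast
    ultimately show ?thesis using Suc.prems T(2) by simp
  qed
  moreover have "finite (X - T)" "card (X - T) \<le> n" "finite G'"
    using X card_mono[OF X(1), of "X - T"] G(1) by (auto simp: G'_def)
  moreover have "0 < \<delta> / 2" using \<open>0 < \<delta>\<close> by simp
  ultimately obtain x where x: "x \<in> X - T" "\<delta> / 2 * real (card G') \<le> real (card {g\<in>G'. x \<in> d g})"
    using ex_element_in_many_sets[of "X - T" n "\<delta> / 2" G' d] \<open>1 \<le> n\<close> by blast
  have "{g\<in>G'. x \<in> d g} = {g\<in>G. insert x T \<subseteq> d g}" by (auto simp: G'_def)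
  moreover have "(\<delta> / 2) ^ Suc j * real (card G) \<le> \<delta> / 2 * real (card G')"
    using many \<open>0 < \<delta>\<close> by (simp add: G'_def mult_left_mono)
  moreover have "insert x T \<subseteq> X" "card (insert x T) = Suc j"
    using x(1) T finite_subset[OF T(1) X(1)] by auto
  ultimately show ?case using x(2) by (intro exI[of _ "insert x T"]) auto
qed

lemma ex_set_with_dense_common_link:
  assumes X: "finite X" "card X \<le> n" and "1 \<le> n" "0 < \<beta>"
    and F: "F \<subseteq> {e. e \<subseteq> X \<and> card e = Suc k}" and dense: "\<beta> * real n ^ Suc k \<le> real (card F)"
    and j: "real j \<le> \<beta> * real n / 4"
  shows "\<exists>T\<subseteq>X. card T = j \<and>
    (\<beta> / 4) ^ j * (\<beta> / 2) * real n ^ k \<le> real (card {g. g \<subseteq> X - T \<and> card g = k \<and> T \<subseteq> link F g})"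
proof -
  define G where "G = {g. g \<subseteq> X \<and> card g = k \<and> \<beta> * real n / 2 \<le> real (card (link F g))}"
  have G_large: "\<beta> / 2 * real n ^ k \<le> real (card G)"
    unfolding G_def using card_sets_with_large_link_ge[OF X \<open>1 \<le> n\<close> _ F dense] \<open>0 < \<beta>\<close> by simp
  have finG: "finite G" unfolding G_def using X(1) by (auto intro: finite_subset[of _ "Pow X"])
  have nonempty: "G \<noteq> {}"
  proof -
    have "0 < \<beta> / 2 * real n ^ k" using \<open>0 < \<beta>\<close> \<open>1 \<le> n\<close> by simp
    then show ?thesis using G_large by auto
  qed
  have rich: "\<forall>g\<in>G. link F g \<subseteq> X \<and> \<beta> / 2 * real n \<le> real (card (link F g))"
    using link_subset[OF F] by (simp add: G_def)
  have "0 < \<beta> / 2" "real j \<le> \<beta> / 2 * real n / 2" using \<open>0 < \<beta>\<close> j by simp_all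
  from ex_subset_in_many_sets[OF X \<open>1 \<le> n\<close> this(1) finG nonempty rich this(2)]
  obtain T where T: "T \<subseteq> X" "card T = j"
    and many: "(\<beta> / 2 / 2) ^ j * real (card G) \<le> real (card {g\<in>G. T \<subseteq> link F g})"
    by (elim exE conjE) (rule that)
  have "(\<beta> / 4) ^ j * (\<beta> / 2) * real n ^ k \<le> (\<beta> / 4) ^ j * real (card G)"
    using mult_left_mono[OF G_large, of "(\<beta> / 4) ^ j"] \<open>0 < \<beta>\<close> by (simp add: mult.assoc)
  also have "\<dots> \<le> real (card {g\<in>G. T \<subseteq> link F g})" using many by simp
  also have "\<dots> \<le> real (card {g. g \<subseteq> X - T \<and> card g = k \<and> T \<subseteq> link F g})"
  proof -
    have "{g\<in>G. T \<subseteq> link F g} \<subseteq> {g. g \<subseteq> X - T \<and> card g = k \<and> T \<subseteq> link F g}"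
      by (auto simp: G_def link_def)
    moreover have "finite {g. g \<subseteq> X - T \<and> card g = k \<and> T \<subseteq> link F g}"
      using X(1) by (auto intro: finite_subset[of _ "Pow X"])
    ultimately show ?thesis by (simp add: card_mono)
  qed
  finally show ?thesis using T by blast
qed

lemma partite_supersaturation:
  assumes "finite I" "0 < \<beta>"
  shows "\<exists>N. \<forall>n\<ge>N. \<forall>(X :: 'a set) F. finite X \<longrightarrow> card X \<le> n \<longrightarrow>
    F \<subseteq> {e. e \<subseteq> X \<and> card e = card I} \<longrightarrow> \<beta> * real n ^ card I \<le> real (card F) \<longrightarrow>
    (\<exists>W. partite_copy I t X F W)"
  using assms
proof (induction I arbitrary: \<beta> rule: finite_induct)
  case empty
  have "partite_copy {} t X F W" if "F \<subseteq> {e. e \<subseteq> X \<and> card e = 0}" "\<beta> \<le> real (card F)"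
    and "finite X" for X :: "'a set" and F W
  proof -
    have "F \<noteq> {}" using that(2) \<open>0 < \<beta>\<close> by auto
    then obtain e where e: "e \<in> F" by blast
    then have "e \<subseteq> X" "card e = 0" using that(1) by auto
    then have "{} \<in> F" using e finite_subset[OF _ \<open>finite X\<close>] by fastforce
    then show ?thesis by (simp add: partite_copy_def)
  qed
  then show ?case by (intro exI[of _ 0] allI impI) simp
next
  case (insert i I)
  define \<beta>' where "\<beta>' = (\<beta> / 4) ^ t i * (\<beta> / 2)"
  have "0 < \<beta>'" using insert.prems by (simp add: \<beta>'_def)
  obtain N' where N': "\<forall>n\<ge>N'. \<forall>(X :: 'a set) F. finite X \<longrightarrow> card X \<le> n \<longrightarrow>
    F \<subseteq> {e. e \<subseteq> X \<and> card e = card I} \<longrightarrow> \<beta>' * real n ^ card I \<le> real (card F) \<longrightarrow>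
    (\<exists>W. partite_copy I t X F W)"
    using insert.IH[OF \<open>0 < \<beta>'\<close>] by blast
  show ?case
  proof (intro exI[of _ "max (max N' 1) (nat \<lceil>4 * real (t i) / \<beta>\<rceil>)"] allI impI)
    fix n and X :: "'a set" and F
    assume n: "max (max N' 1) (nat \<lceil>4 * real (t i) / \<beta>\<rceil>) \<le> n" and X: "finite X" "card X \<le> n"
      and F: "F \<subseteq> {e. e \<subseteq> X \<and> card e = card (insert i I)}"
      and dense: "\<beta> * real n ^ card (insert i I) \<le> real (card F)"
    have "N' \<le> n" "1 \<le> n" "4 * real (t i) / \<beta> \<le> real n" using n by linarith+
    then have j: "real (t i) \<le> \<beta> * real n / 4" using \<open>0 < \<beta>\<close> by (simp add: field_simps)
    have F_card: "F \<subseteq> {e. e \<subseteq> X \<and> card e = Suc (card I)}"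
      and dense': "\<beta> * real n ^ Suc (card I) \<le> real (card F)"
      using F dense insert.hyps by simp_all
    define F' where "F' T = {g. g \<subseteq> X - T \<and> card g = card I \<and> T \<subseteq> link F g}" for T
    obtain T where T: "T \<subseteq> X" "card T = t i" and link_dense: "\<beta>' * real n ^ card I \<le> real (card (F' T))"
      using ex_set_with_dense_common_link[OF X \<open>1 \<le> n\<close> \<open>0 < \<beta>\<close> F_card dense' j]
      unfolding \<beta>'_def F'_def by blast
    have "card (X - T) \<le> n" using X card_mono[OF X(1), of "X - T"] by auto
    moreover have "F' T \<subseteq> {e. e \<subseteq> X - T \<and> card e = card I}" by (auto simp: F'_def)
    ultimately obtain W where "partite_copy I t (X - T) (F' T) W"
      using N' \<open>N' \<le> n\<close> X(1) link_dense by blast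
    then have "partite_copy (insert i I) t X F (W(i := T))"
      by (rule partite_copy_insert) (use insert.hyps T in \<open>auto simp: F'_def link_def\<close>)
    then show "\<exists>W. partite_copy (insert i I) t X F W" by blast
  qed
qed

lemma ordered_copy_if_partite_copy:
  assumes "partite_copy {1..r} s X H W" "W 1 \<subseteq> V1" "\<forall>i\<in>{2..r}. W i \<subseteq> V2"
  shows "ordered_copy r s H V1 V2 W"
  using assms by (auto simp: partite_copy_def ordered_copy_def)

text \<open>Among the unused \<open>(r-1)\<close>-subsets of \<open>V2\<close>, at least \<open>\<alpha> n^(r-1) / 4\<close> have \<open>s\<^sub>1\<close>
  neighbours in a pool of \<open>pool_size \<alpha> s\<^sub>1\<close> vertices of \<open>V1\<close>; one of the \<open>s\<^sub>1\<close>-subsets of the pool is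
  shared by a \<open>1/(pool_size \<alpha> s\<^sub>1 choose s\<^sub>1)\<close> fraction of them, which gives \<open>link_density\<close>.
  The \<open>max 1\<close> only guards against a vanishing binomial coefficient.\<close>

definition pool_size :: "real \<Rightarrow> nat \<Rightarrow> nat"
  where "pool_size \<alpha> s1 = nat \<lceil>4 * real s1 / \<alpha>\<rceil>"

lemma pool_size_bounds:
  assumes "0 < \<alpha>"
  shows "4 * real s1 / \<alpha> \<le> real (pool_size \<alpha> s1)" "real (pool_size \<alpha> s1) < 4 * real s1 / \<alpha> + 1"
proof -
  have "0 \<le> 4 * real s1 / \<alpha>" using assms by simp
  then have "0 \<le> \<lceil>4 * real s1 / \<alpha>\<rceil>" by simp
  then show "4 * real s1 / \<alpha> \<le> real (pool_size \<alpha> s1)" "real (pool_size \<alpha> s1) < 4 * real s1 / \<alpha> + 1"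
    using ceiling_correct[of "4 * real s1 / \<alpha>"] by (simp_all add: pool_size_def)
qed

definition link_density :: "real \<Rightarrow> nat \<Rightarrow> real"
  where "link_density \<alpha> s1 = \<alpha> / (4 * real (max 1 (pool_size \<alpha> s1 choose s1)))"

lemma link_density_pos: "0 < \<alpha> \<Longrightarrow> 0 < link_density \<alpha> s1"
  by (simp add: link_density_def)

lemma link_density_le: "0 < \<alpha> \<Longrightarrow> link_density \<alpha> s1 \<le> \<alpha> / 4"
  unfolding link_density_def by (rule divide_left_mono) auto

locale semibipartite_setting =
  fixes r :: nat and s :: "nat \<Rightarrow> nat" and \<alpha> :: real
    and H :: "'a set set" and V1 V2 :: "'a set" and n :: nat
  assumes r_ge_2: "2 \<le> r" and s1_ge_2: "2 \<le> s 1" and \<alpha>_pos: "0 < \<alpha>"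
    and semibipartite: "semibipartite r H V1 V2" and card_V2: "card V2 = n" and n_pos: "1 \<le> n"
    and min_degree: "\<forall>v\<in>V1. \<alpha> * real n ^ (r - 1) \<le> real (hdeg H v)"
begin

definition common_link :: "'a set \<Rightarrow> 'a set \<Rightarrow> 'a set set"
  where "common_link U S = {g. g \<subseteq> V2 - U \<and> card g = r - 1 \<and> (\<forall>v\<in>S. insert v g \<in> H)}"

definition L :: "'a set"
  where "L = {v \<in> V1. real (n choose (r - 1)) - \<alpha> * real n ^ (r - 1) / (2 * real (s 1))
    \<le> real (hdeg H v)}"

lemma finite_V1: "finite V1" and finite_V2: "finite V2" and disjoint_V1_V2: "V1 \<inter> V2 = {}"
  using semibipartite by (auto simp: semibipartite_def)

lemma finite_common_link: "finite (common_link U S)"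
  unfolding common_link_def using finite_V2 by (auto intro: finite_subset[of _ "Pow V2"])

lemma card_common_link_le: "card (common_link U S) \<le> n ^ (r - 1)"
proof -
  have "card (common_link U S) \<le> card {g. g \<subseteq> V2 - U \<and> card g = r - 1}"
    using finite_V2 by (intro card_mono) (auto simp: common_link_def intro: finite_subset[of _ "Pow V2"])
  also have "\<dots> \<le> n ^ (r - 1)"
    using finite_V2 card_V2 card_mono[OF finite_V2, of "V2 - U"] by (intro card_subsets_le_power) auto
  finally show ?thesis .
qed

lemma card_common_link_empty: "card (common_link {} {}) = n choose (r - 1)"
  using n_subsets[OF finite_V2, of "r - 1"] card_V2 by (simp add: common_link_def)

lemma hdeg_le_card_common_link:
  assumes "v \<in> V1"
  shows "hdeg H v \<le> card (common_link {} {v})"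
  unfolding hdeg_def
proof (rule card_inj_on_le[OF _ _ finite_common_link])
  show "inj_on (\<lambda>e. e - {v}) {e \<in> H. v \<in> e}"
    by (rule inj_onI) (metis (no_types, lifting) insert_Diff mem_Collect_eq)
  show "(\<lambda>e. e - {v}) ` {e \<in> H. v \<in> e} \<subseteq> common_link {} {v}"
  proof
    fix g assume "g \<in> (\<lambda>e. e - {v}) ` {e \<in> H. v \<in> e}"
    then obtain e where e: "e \<in> H" "v \<in> e" "g = e - {v}" by auto
    have e': "e \<subseteq> V1 \<union> V2" "card e = r" "card (e \<inter> V1) = 1"
      using semibipartite e(1) by (auto simp: semibipartite_def)
    then have "finite e" using r_ge_2 card.infinite by fastforce
    have "e \<inter> V1 = {v}" using e'(3) e(2) assms by (metis IntI card_1_singletonE singletonD)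
    then show "g \<in> common_link {} {v}"
      using e e' \<open>finite e\<close> by (auto simp: common_link_def insert_absorb)
  qed
qed

lemma card_common_link_avoiding_ge:
  assumes v: "v \<in> V1" and U: "U \<subseteq> V2" "real (card U) \<le> \<alpha> * real n / (8 * real (s 1))"
  shows "\<alpha> * real n ^ (r - 1) - \<alpha> * real n ^ (r - 1) / (8 * real (s 1))
    \<le> real (card (common_link U {v}))"
proof -
  define B where "B u = {g. g \<subseteq> V2 \<and> card g = Suc (r - 2) \<and> u \<in> g}" for u
  have finU: "finite U" using U(1) finite_V2 finite_subset by auto
  have "common_link {} {v} \<subseteq> common_link U {v} \<union> (\<Union>u\<in>U. B u)"
    using r_ge_2 by (auto simp: common_link_def B_def Suc_diff_Suc numeral_2_eq_2)
  then have "card (common_link {} {v}) \<le> card (common_link U {v} \<union> (\<Union>u\<in>U. B u))"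
    using finU finite_V2 by (intro card_mono) (auto simp: finite_common_link B_def intro: finite_subset[of _ "Pow V2"])
  also have "\<dots> \<le> card (common_link U {v}) + (\<Sum>u\<in>U. card (B u))"
    using card_Un_le card_UN_le[OF finU, of B] by (meson add_left_mono le_trans)
  also have "(\<Sum>u\<in>U. card (B u)) \<le> card U * n ^ (r - 2)"
    using sum_bounded_above[of U "\<lambda>u. card (B u)" "n ^ (r - 2)"]
      card_subsets_containing_le_power[OF finite_V2] card_V2 by (simp add: B_def)
  finally have "hdeg H v \<le> card (common_link U {v}) + card U * n ^ (r - 2)"
    using hdeg_le_card_common_link[OF v] by linarith
  then have "real (hdeg H v) \<le> real (card (common_link U {v})) + real (card U) * real n ^ (r - 2)"
    by (metis of_nat_add of_nat_le_iff of_nat_mult of_nat_power)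
  moreover have "real (card U) * real n ^ (r - 2) \<le> \<alpha> * real n ^ (r - 1) / (8 * real (s 1))"
  proof -
    have "real (card U) * real n ^ (r - 2) \<le> \<alpha> * real n / (8 * real (s 1)) * real n ^ (r - 2)"
      using U(2) by (intro mult_right_mono) auto
    also have "\<dots> = \<alpha> * (real n * real n ^ (r - 2)) / (8 * real (s 1))" by simp
    also have "real n * real n ^ (r - 2) = real n ^ (r - 1)"
      using r_ge_2 by (simp add: power_Suc[symmetric] Suc_diff_Suc numeral_2_eq_2)
    finally show ?thesis .
  qed
  moreover have "\<alpha> * real n ^ (r - 1) \<le> real (hdeg H v)" using min_degree v by blast
  ultimately show ?thesis by linarith
qed

lemma card_common_link_avoiding_ge_half:
  assumes "v \<in> V1" "U \<subseteq> V2" "real (card U) \<le> \<alpha> * real n / (8 * real (s 1))"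
  shows "\<alpha> * real n ^ (r - 1) / 2 \<le> real (card (common_link U {v}))"
proof -
  have "\<alpha> * real n ^ (r - 1) / (8 * real (s 1)) \<le> \<alpha> * real n ^ (r - 1) / 2"
    using s1_ge_2 \<alpha>_pos by (intro divide_left_mono) auto
  then show ?thesis using card_common_link_avoiding_ge[OF assms] by linarith
qed

lemma card_sets_missed_by_L_le:
  assumes "a \<in> L"
  shows "real (card (common_link {} {} - common_link {} {a})) \<le> \<alpha> * real n ^ (r - 1) / (2 * real (s 1))"
proof -
  have a: "a \<in> V1" using assms by (simp add: L_def)
  have sub: "common_link {} {a} \<subseteq> common_link {} {}" by (auto simp: common_link_def)
  then have "card (common_link {} {} - common_link {} {a}) = card (common_link {} {}) - card (common_link {} {a})"
    by (rule card_Diff_subset[OF finite_common_link])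
  moreover have "card (common_link {} {a}) \<le> card (common_link {} {})"
    using sub by (rule card_mono[OF finite_common_link])
  ultimately have "real (card (common_link {} {} - common_link {} {a}))
      = real (n choose (r - 1)) - real (card (common_link {} {a}))"
    by (simp add: of_nat_diff card_common_link_empty)
  also have "\<dots> \<le> real (n choose (r - 1)) - real (hdeg H a)"
    using hdeg_le_card_common_link[OF a] by simp
  also have "\<dots> \<le> \<alpha> * real n ^ (r - 1) / (2 * real (s 1))" using assms by (simp add: L_def)
  finally show ?thesis .
qed

lemma card_common_link_L_insert:
  assumes A: "A \<subseteq> L" "card A = s 1 - 1" and v: "v \<in> V1"
    and U: "U \<subseteq> V2" "real (card U) \<le> \<alpha> * real n / (8 * real (s 1))"
  shows "\<alpha> * real n ^ (r - 1) / 2 \<le> real (card (common_link U (insert v A)))"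
proof -
  define M where "M = \<alpha> * real n ^ (r - 1)"
  define S where "S = real (s 1)"
  define missed where "missed a = common_link {} {} - common_link {} {a}" for a
  have S: "2 \<le> S" using s1_ge_2 by (simp add: S_def)
  have finA: "finite A" using A(2) s1_ge_2 card.infinite by fastforce
  have "common_link U {v} \<subseteq> common_link U (insert v A) \<union> (\<Union>a\<in>A. missed a)"
    by (auto simp: common_link_def missed_def)
  moreover have "finite (common_link U (insert v A) \<union> (\<Union>a\<in>A. missed a))"
    using finA by (simp add: missed_def finite_common_link)
  ultimately have "card (common_link U {v}) \<le> card (common_link U (insert v A) \<union> (\<Union>a\<in>A. missed a))"
    by (rule card_mono[rotated])
  also have "\<dots> \<le> card (common_link U (insert v A)) + card (\<Union>a\<in>A. missed a)" by (rule card_Un_le)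
  also have "card (\<Union>a\<in>A. missed a) \<le> (\<Sum>a\<in>A. card (missed a))" using finA by (rule card_UN_le)
  finally have split: "real (card (common_link U {v}))
      \<le> real (card (common_link U (insert v A))) + (\<Sum>a\<in>A. real (card (missed a)))"
    by (simp only: of_nat_add[symmetric] of_nat_sum[symmetric] of_nat_le_iff)
  have "(\<Sum>a\<in>A. real (card (missed a))) \<le> (\<Sum>a\<in>A. M / (2 * S))"
    using A(1) card_sets_missed_by_L_le by (intro sum_mono) (auto simp: missed_def M_def S_def)
  also have "\<dots> = M / 2 - M / (2 * S)"
    using A(2) s1_ge_2 S by (simp add: S_def of_nat_diff field_simps)
  finally have "(\<Sum>a\<in>A. real (card (missed a))) \<le> M / 2 - M / (2 * S)" .
  moreover have "M - M / (8 * S) \<le> real (card (common_link U {v}))"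
    using card_common_link_avoiding_ge[OF v U] by (simp add: M_def S_def)
  moreover have "M / (8 * S) \<le> M / (2 * S)"
    using S \<alpha>_pos by (simp add: M_def frac_le)
  ultimately show ?thesis using split unfolding M_def by linarith
qed

lemma many_sets_with_s1_pool_neighbours:
  assumes P: "P \<subseteq> V1" "card P = pool_size \<alpha> (s 1)"
    and U: "U \<subseteq> V2" "real (card U) \<le> \<alpha> * real n / (8 * real (s 1))"
  shows "\<alpha> * real n ^ (r - 1) / 4
    \<le> real (card {g \<in> common_link U {}. s 1 \<le> card {v\<in>P. insert v g \<in> H}})"
    (is "_ \<le> real (card ?B)")
proof -
  define p where "p = real (pool_size \<alpha> (s 1))"
  define M where "M = \<alpha> * real n ^ (r - 1)"
  define K where "K = common_link U {}"
  have S: "2 \<le> real (s 1)" using s1_ge_2 by simp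
  have "4 * real (s 1) / \<alpha> \<le> p" unfolding p_def using pool_size_bounds(1)[OF \<alpha>_pos] .
  then have p: "4 * real (s 1) \<le> p * \<alpha>" using \<alpha>_pos by (simp add: field_simps)
  then have "0 < p * \<alpha>" using S by linarith
  then have "0 < p" using \<alpha>_pos by (simp add: zero_less_mult_iff)
  have finP: "finite P" using P(1) finite_V1 finite_subset by blast
  have finK: "finite K" unfolding K_def by (rule finite_common_link)
  have "p * (M / 2) \<le> (\<Sum>v\<in>P. real (card {g\<in>K. insert v g \<in> H}))"
  proof -
    have "M / 2 \<le> real (card {g\<in>K. insert v g \<in> H})" if "v \<in> P" for v
    proof -
      have "{g\<in>K. insert v g \<in> H} = common_link U {v}" by (auto simp: K_def common_link_def)
      then show ?thesis using card_common_link_avoiding_ge_half[OF _ U] that P(1) by (auto simp: M_def)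
    qed
    then show ?thesis
      using sum_bounded_below[of P "M / 2" "\<lambda>v. real (card {g\<in>K. insert v g \<in> H})"] P(2)
      by (simp add: p_def mult.commute)
  qed
  also have "\<dots> = (\<Sum>g\<in>K. real (card {v\<in>P. insert v g \<in> H}))"
    by (simp only: of_nat_sum[symmetric] sum_card_filter_swap[OF finP finK])
  also have "\<dots> \<le> real (card ?B) * p + real (card K) * (real (s 1) - 1)"
    unfolding K_def[symmetric]
  proof (rule sum_le_threshold_split[OF finK])
    fix g
    show "real (card {v\<in>P. insert v g \<in> H}) \<le> p"
      using card_mono[OF finP, of "{v\<in>P. insert v g \<in> H}"] P(2) by (simp add: p_def)
    show "\<not> s 1 \<le> card {v\<in>P. insert v g \<in> H} \<Longrightarrow> real (card {v\<in>P. insert v g \<in> H}) \<le> real (s 1) - 1"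
      by linarith
  qed (use S in simp)
  also have "real (card K) * (real (s 1) - 1) \<le> p * (M / 4)"
  proof -
    have "real (card K) * (real (s 1) - 1) \<le> real n ^ (r - 1) * real (s 1)"
      using card_common_link_le[of U "{}"] S unfolding K_def
      by (intro mult_mono) (simp_all add: of_nat_le_iff[symmetric])
    also have "\<dots> \<le> real n ^ (r - 1) * (p * \<alpha> / 4)" using p by (intro mult_left_mono) auto
    finally show ?thesis by (simp add: M_def mult_ac)
  qed
  finally have "p * (M / 4) \<le> p * real (card ?B)" by (simp add: mult.commute)
  then show ?thesis using \<open>0 < p\<close> by (simp add: M_def)
qed

lemma pool_common_link:
  assumes P: "P \<subseteq> V1" "card P = pool_size \<alpha> (s 1)"
    and U: "U \<subseteq> V2" "real (card U) \<le> \<alpha> * real n / (8 * real (s 1))"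
  shows "\<exists>T\<subseteq>P. card T = s 1 \<and> link_density \<alpha> (s 1) * real n ^ (r - 1) \<le> real (card (common_link U T))"
proof -
  define B where "B = {g \<in> common_link U {}. s 1 \<le> card {v\<in>P. insert v g \<in> H}}"
  define Sig where "Sig = {T. T \<subseteq> P \<and> card T = s 1}"
  define f where "f g = (SOME T. T \<subseteq> {v\<in>P. insert v g \<in> H} \<and> card T = s 1)" for g
  have f: "f g \<subseteq> {v\<in>P. insert v g \<in> H} \<and> card (f g) = s 1" if "g \<in> B" for g
    unfolding f_def
    by (rule someI_ex) (use that in \<open>auto simp: B_def intro: obtain_subset_with_card_n\<close>)
  have B_large: "\<alpha> * real n ^ (r - 1) / 4 \<le> real (card B)"
    unfolding B_def by (rule many_sets_with_s1_pool_neighbours[OF P U])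
  have finP: "finite P" using P(1) finite_V1 finite_subset by blast
  have "finite B" by (simp add: B_def finite_common_link)
  moreover have "finite Sig" unfolding Sig_def using finP by (auto intro: finite_subset[of _ "Pow P"])
  moreover have "f ` B \<subseteq> Sig" using f by (auto simp: Sig_def)
  moreover have "B \<noteq> {}"
  proof -
    have "0 < \<alpha> * real n ^ (r - 1) / 4" using \<alpha>_pos n_pos by simp
    then show ?thesis using B_large by auto
  qed
  ultimately obtain T where T: "T \<in> Sig" "real (card B) \<le> real (card Sig) * real (card {g\<in>B. f g = T})"
    using pigeonhole_fibre by blast
  define c where "c = real (max 1 (pool_size \<alpha> (s 1) choose s 1))"
  have "card Sig = pool_size \<alpha> (s 1) choose s 1"
    unfolding Sig_def using n_subsets[OF finP] P(2) by simp
  then have "real (card Sig) \<le> c" by (simp add: c_def)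
  moreover have "card {g\<in>B. f g = T} \<le> card (common_link U T)"
    using f by (intro card_mono[OF finite_common_link]) (auto simp: B_def common_link_def)
  ultimately have "real (card Sig) * real (card {g\<in>B. f g = T}) \<le> c * real (card (common_link U T))"
    by (intro mult_mono) (auto simp: c_def)
  then have "\<alpha> * real n ^ (r - 1) / 4 \<le> c * real (card (common_link U T))"
    using B_large T(2) by linarith
  then have "link_density \<alpha> (s 1) * real n ^ (r - 1) \<le> real (card (common_link U T))"
    by (simp add: link_density_def c_def field_simps)
  then show ?thesis using T(1) by (auto simp: Sig_def)
qed

end

locale copy_packing_setting = semibipartite_setting +
  fixes m :: nat
  assumes card_V1: "card V1 = m"
    and m_small: "real m \<le> \<alpha> * real n / (8 * (real (\<Sum>i=1..r. s i) - real (s 1)))"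
    and L_large: "min (5 * real (s 1) * (real (s 1) - 1) / \<alpha>) ((real (s 1) - 1) / real (s 1) * real m)
      \<le> real (card L)"
    \<comment> \<open>\<open>n\<close> is large enough for \<open>partite_supersaturation\<close> at density \<open>link_density \<alpha> (s 1)\<close>\<close>
    and dense_contains_partite: "\<And>(X :: 'a set) F. finite X \<Longrightarrow> card X \<le> n \<Longrightarrow>
      F \<subseteq> {e. e \<subseteq> X \<and> card e = r - 1} \<Longrightarrow>
      link_density \<alpha> (s 1) * real n ^ (r - 1) \<le> real (card F) \<Longrightarrow>
      \<exists>W. partite_copy {2..r} s X F W"
begin

definition q :: nat where "q = m div s 1"

definition D :: nat where "D = (\<Sum>i=2..r. s i)"

lemma q_mult_le: "q * s 1 \<le> m"
  by (simp add: q_def)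

lemma ordered_copy_from_common_link:
  assumes S: "S \<subseteq> V1" "card S = s 1" and "U \<subseteq> V2"
    and dense: "link_density \<alpha> (s 1) * real n ^ (r - 1) \<le> real (card (common_link U S))"
  shows "\<exists>W. ordered_copy r s H V1 V2 W \<and> W 1 = S \<and> (\<forall>i\<in>{2..r}. W i \<subseteq> V2 - U)"
proof -
  have "card (V2 - U) \<le> n" using card_mono[OF finite_V2, of "V2 - U"] card_V2 by auto
  moreover have "common_link U S \<subseteq> {e. e \<subseteq> V2 - U \<and> card e = r - 1}"
    by (auto simp: common_link_def)
  ultimately obtain W where W: "partite_copy {2..r} s (V2 - U) (common_link U S) W"
    using dense_contains_partite[of "V2 - U" "common_link U S"] dense finite_V2 by blast
  have "(S \<union> (V2 - U)) - S = V2 - U" using S(1) disjoint_V1_V2 by blast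
  then have "partite_copy (insert 1 {2..r}) s (S \<union> (V2 - U)) H (W(1 := S))"
    using W S by (intro partite_copy_insert) (auto simp: common_link_def)
  moreover have "insert 1 {2..r} = {1..r}" using r_ge_2 by auto
  ultimately have "partite_copy {1..r} s (S \<union> (V2 - U)) H (W(1 := S))" by simp
  moreover have "\<forall>i\<in>{2..r}. (W(1 := S)) i \<subseteq> V2 - U" using W by (simp add: partite_copy_def)
  ultimately have "ordered_copy r s H V1 V2 (W(1 := S))"
    using S(1) by (intro ordered_copy_if_partite_copy) auto
  then show ?thesis using \<open>\<forall>i\<in>{2..r}. (W(1 := S)) i \<subseteq> V2 - U\<close> by fastforce
qed

lemma card_used_V2_le:
  assumes "j < q" "card U \<le> j * D"
  shows "real (card U) \<le> \<alpha> * real n / (8 * real (s 1))"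
proof -
  have sum_split: "(\<Sum>i=1..r. s i) = s 1 + D"
    using sum.atLeast_Suc_atMost[of 1 r s] r_ge_2 by (simp add: D_def numeral_2_eq_2)
  have "real (\<Sum>i=1..r. s i) - real (s 1) = real D" unfolding sum_split by simp
  then have "real m \<le> \<alpha> * real n / (8 * real D)" using m_small by simp
  \<comment> \<open>if \<open>D = 0\<close>, this bound divides by zero and forces \<open>m = 0\<close>\<close>
  then have m: "real m * (8 * real D) \<le> \<alpha> * real n"
    using \<alpha>_pos by (cases "D = 0") (simp_all add: field_simps)
  have "card U \<le> q * D" using assms by (meson less_imp_le_nat mult_le_mono1 le_trans)
  then have "card U * s 1 \<le> q * D * s 1" by (rule mult_le_mono1)
  also have "\<dots> = (q * s 1) * D" by simp
  also have "\<dots> \<le> m * D" using q_mult_le by (rule mult_le_mono1)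
  finally have "real (card U) * real (s 1) \<le> real m * real D" by (metis of_nat_le_iff of_nat_mult)
  then have "real (card U) * real (s 1) * 8 \<le> \<alpha> * real n" using m by linarith
  then show ?thesis using s1_ge_2 by (simp add: field_simps)
qed

lemma card_L_ge_if_few_outside:
  assumes "L \<subseteq> R" "finite R" "Q * s 1 \<le> card R" "Q * s 1 \<le> m"
    and few_outside: "card (R - L) < pool_size \<alpha> (s 1)"
  shows "Q * (s 1 - 1) \<le> card L"
proof -
  have S: "2 \<le> real (s 1)" using s1_ge_2 by simp
  have Q_s1: "real (Q * (s 1 - 1)) = real Q * (real (s 1) - 1)" using s1_ge_2 by (simp add: of_nat_diff)
  consider "5 * real (s 1) * (real (s 1) - 1) / \<alpha> \<le> real (card L)"
    | "(real (s 1) - 1) / real (s 1) * real m \<le> real (card L)"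
    using L_large by linarith
  then show ?thesis
  proof cases
    case 1
    show ?thesis
    proof (cases "Q < pool_size \<alpha> (s 1)")
      case True
      have "real Q \<le> 4 * real (s 1) / \<alpha>"
        using True pool_size_bounds(2)[OF \<alpha>_pos, of "s 1"] by linarith
      then have "real Q * (real (s 1) - 1) \<le> 4 * real (s 1) / \<alpha> * (real (s 1) - 1)"
        using S by (intro mult_right_mono) auto
      also have "\<dots> \<le> 5 * real (s 1) * (real (s 1) - 1) / \<alpha>"
        using \<alpha>_pos S by (simp add: field_simps)
      finally have "real (Q * (s 1 - 1)) \<le> real (card L)" using 1 Q_s1 by linarith
      then show ?thesis by (simp only: of_nat_le_iff)
    next
      case False
      have "card R = card (R - L) + card L"
        using assms(1,2) by (metis card_Diff_subset card_mono finite_subset le_add_diff_inverse2)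
      then show ?thesis
        using False few_outside assms(3) s1_ge_2 by (simp add: diff_mult_distrib2)
    qed
  next
    case 2
    have "real Q * (real (s 1) - 1) = real (Q * s 1) * (real (s 1) - 1) / real (s 1)"
      using S by (simp add: field_simps)
    also have "\<dots> \<le> real m * (real (s 1) - 1) / real (s 1)"
      using of_nat_mono[OF assms(4), where 'a=real] S by (intro divide_right_mono mult_right_mono) auto
    also have "\<dots> = (real (s 1) - 1) / real (s 1) * real m" by simp
    finally have "real (Q * (s 1 - 1)) \<le> real (card L)" using 2 Q_s1 by linarith
    then show ?thesis by (simp only: of_nat_le_iff)
  qed
qed

text \<open>Invariant of the greedy packing; \<open>R\<close> is the set of unused vertices of \<open>V1\<close> after \<open>j\<close>
  copies.\<close>
definition enough_L :: "nat \<Rightarrow> 'a set \<Rightarrow> bool"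
  where "enough_L j R \<longleftrightarrow> L \<subseteq> R \<or> (q - j) * (s 1 - 1) \<le> card (R \<inter> L)"

lemma first_part_from_pool:
  assumes "R \<subseteq> V1" "L \<subseteq> R" "pool_size \<alpha> (s 1) \<le> card (R - L)"
    and U: "U \<subseteq> V2" "real (card U) \<le> \<alpha> * real n / (8 * real (s 1))"
  shows "\<exists>S\<subseteq>R. card S = s 1 \<and> link_density \<alpha> (s 1) * real n ^ (r - 1) \<le> real (card (common_link U S))
    \<and> enough_L (Suc j) (R - S)"
proof -
  obtain P where P: "P \<subseteq> R - L" "card P = pool_size \<alpha> (s 1)"
    using assms(3) by (meson obtain_subset_with_card_n)
  then obtain S where "S \<subseteq> P" "card S = s 1"
    "link_density \<alpha> (s 1) * real n ^ (r - 1) \<le> real (card (common_link U S))"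
    using pool_common_link[OF _ P(2) U] assms(1) by blast
  moreover have "L \<subseteq> R - S" using \<open>S \<subseteq> P\<close> P(1) assms(2) by blast
  ultimately show ?thesis using P(1) by (auto simp: enough_L_def)
qed

lemma enough_L_Diff_insert:
  assumes "finite R" and A: "A \<subseteq> R \<inter> L" "card A = s 1 - 1"
    and v: "v \<in> R" "v \<notin> A" "v \<notin> L \<or> R \<subseteq> L"
    and R: "(q - j) * s 1 \<le> card R" and L_left: "(q - j) * (s 1 - 1) \<le> card (R \<inter> L)"
  shows "enough_L (Suc j) (R - insert v A)"
  using v(3)
proof
  assume "v \<notin> L"
  then have "(R - insert v A) \<inter> L = (R \<inter> L) - A" using A(1) by auto
  moreover have "card (R \<inter> L - A) = card (R \<inter> L) - card A"
    using A(1) \<open>finite R\<close> by (intro card_Diff_subset) (auto dest: finite_subset)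
  moreover have "(q - Suc j) * (s 1 - 1) = (q - j) * (s 1 - 1) - (s 1 - 1)"
    by (simp add: diff_mult_distrib)
  ultimately show ?thesis using A(2) L_left diff_le_mono by (simp add: enough_L_def)
next
  assume "R \<subseteq> L"
  then have "(R - insert v A) \<inter> L = R - insert v A" by blast
  moreover have "card (R - insert v A) = card R - s 1"
  proof -
    have "insert v A \<subseteq> R" "card (insert v A) = s 1"
      using v(1,2) A \<open>finite R\<close> s1_ge_2 by (auto dest: finite_subset)
    then show ?thesis using card_Diff_subset[OF finite_subset[OF _ \<open>finite R\<close>]] by simp
  qed
  moreover have "(q - Suc j) * (s 1 - 1) \<le> card R - s 1"
  proof -
    have "(q - Suc j) * (s 1 - 1) \<le> (q - Suc j) * s 1" by simp
    also have "\<dots> = (q - j) * s 1 - s 1" by (simp add: diff_mult_distrib)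
    also have "\<dots> \<le> card R - s 1" using R by (rule diff_le_mono)
    finally show ?thesis .
  qed
  ultimately show ?thesis by (simp add: enough_L_def)
qed

lemma first_part_from_L:
  assumes j: "j < q" and R: "R \<subseteq> V1" "(q - j) * s 1 \<le> card R"
    and L_left: "(q - j) * (s 1 - 1) \<le> card (R \<inter> L)"
    and U: "U \<subseteq> V2" "real (card U) \<le> \<alpha> * real n / (8 * real (s 1))"
  shows "\<exists>S\<subseteq>R. card S = s 1 \<and> link_density \<alpha> (s 1) * real n ^ (r - 1) \<le> real (card (common_link U S))
    \<and> enough_L (Suc j) (R - S)"
proof -
  have finR: "finite R" using R(1) finite_V1 finite_subset by blast
  have remaining: "1 \<le> q - j" using j by simp
  then have "s 1 - 1 \<le> (q - j) * (s 1 - 1)" by simp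
  then obtain A where A: "A \<subseteq> R \<inter> L" "card A = s 1 - 1"
    using L_left by (meson le_trans obtain_subset_with_card_n)
  obtain v where v: "v \<in> R" "v \<notin> A" "v \<notin> L \<or> R \<subseteq> L"
  proof (cases "R \<subseteq> L")
    case True
    have "s 1 \<le> (q - j) * s 1" using remaining by simp
    then have "card A < card R" using A(2) R(2) s1_ge_2 by linarith
    then have "\<not> R \<subseteq> A" using card_mono[OF finite_subset[OF _ finR]] A(1) by (meson le_inf_iff leD)
    then show ?thesis using that True by blast
  next
    case False
    then show ?thesis using that A(1) by blast
  qed
  have "card (insert v A) = s 1"
    using v(2) A s1_ge_2 finR by (auto dest: finite_subset)
  moreover have "link_density \<alpha> (s 1) * real n ^ (r - 1) \<le> real (card (common_link U (insert v A)))"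
  proof -
    have "link_density \<alpha> (s 1) * real n ^ (r - 1) \<le> \<alpha> / 4 * real n ^ (r - 1)"
      using link_density_le[OF \<alpha>_pos] by (intro mult_right_mono) auto
    also have "\<dots> \<le> \<alpha> * real n ^ (r - 1) / 2" using \<alpha>_pos by simp
    also have "\<dots> \<le> real (card (common_link U (insert v A)))"
      using card_common_link_L_insert[OF _ A(2) _ U] A(1) v(1) R(1) by blast
    finally show ?thesis .
  qed
  moreover have "enough_L (Suc j) (R - insert v A)"
    using enough_L_Diff_insert[OF finR A v R(2) L_left] .
  ultimately show ?thesis using v(1) A(1) by (intro exI[of _ "insert v A"]) auto
qed

lemma first_part_exists:
  assumes j: "j < q" and R: "R \<subseteq> V1" "(q - j) * s 1 \<le> card R" and inv: "enough_L j R"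
    and U: "U \<subseteq> V2" "real (card U) \<le> \<alpha> * real n / (8 * real (s 1))"
  shows "\<exists>S\<subseteq>R. card S = s 1 \<and> link_density \<alpha> (s 1) * real n ^ (r - 1) \<le> real (card (common_link U S))
    \<and> enough_L (Suc j) (R - S)"
proof (cases "L \<subseteq> R \<and> pool_size \<alpha> (s 1) \<le> card (R - L)")
  case True
  then show ?thesis using first_part_from_pool[OF R(1) _ _ U] by blast
next
  case False
  have "(q - j) * (s 1 - 1) \<le> card (R \<inter> L)"
  proof (cases "L \<subseteq> R")
    case True
    have "(q - j) * s 1 \<le> m" using q_mult_le by (meson diff_le_self le_trans mult_le_mono1)
    then have "(q - j) * (s 1 - 1) \<le> card L"
      using card_L_ge_if_few_outside[OF True _ R(2)] False True R(1) finite_V1 finite_subset by auto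
    then show ?thesis using True by (simp add: Int_absorb1)
  qed (use inv in \<open>auto simp: enough_L_def\<close>)
  then show ?thesis by (rule first_part_from_L[OF j R _ U])
qed

definition packing :: "nat \<Rightarrow> (nat \<Rightarrow> nat \<Rightarrow> 'a set) \<Rightarrow> 'a set \<Rightarrow> 'a set \<Rightarrow> bool"
  where "packing j C U1 U2 \<longleftrightarrow>
    U1 \<subseteq> V1 \<and> U2 \<subseteq> V2 \<and> card U1 \<le> j * s 1 \<and> card U2 \<le> j * D \<and> enough_L j (V1 - U1) \<and>
    (\<forall>i<j. ordered_copy r s H V1 V2 (C i) \<and> (\<Union>l\<in>{1..r}. C i l) \<subseteq> U1 \<union> U2) \<and>
    (\<forall>i<j. \<forall>i'<j. i \<noteq> i' \<longrightarrow> (\<Union>l\<in>{1..r}. C i l) \<inter> (\<Union>l\<in>{1..r}. C i' l) = {})"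

lemma fresh_copy_exists:
  assumes j: "j < q" and U1: "U1 \<subseteq> V1" "card U1 \<le> j * s 1" and U2: "U2 \<subseteq> V2" "card U2 \<le> j * D"
    and inv: "enough_L j (V1 - U1)"
  shows "\<exists>W. ordered_copy r s H V1 V2 W \<and> W 1 \<subseteq> V1 - U1 \<and> (\<forall>l\<in>{2..r}. W l \<subseteq> V2 - U2)
    \<and> enough_L (Suc j) (V1 - (U1 \<union> W 1))"
proof -
  have "card (V1 - U1) = m - card U1"
    using U1(1) finite_V1 card_V1 by (simp add: card_Diff_subset finite_subset)
  then have "(q - j) * s 1 \<le> card (V1 - U1)"
    using U1(2) q_mult_le by (simp add: diff_mult_distrib)
  then obtain S where S: "S \<subseteq> V1 - U1" "card S = s 1"
    "link_density \<alpha> (s 1) * real n ^ (r - 1) \<le> real (card (common_link U2 S))"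
    and inv': "enough_L (Suc j) (V1 - U1 - S)"
    using first_part_exists[OF j _ _ inv U2(1) card_used_V2_le[OF j U2(2)]] by blast
  then obtain W where "ordered_copy r s H V1 V2 W" "W 1 = S" "\<forall>l\<in>{2..r}. W l \<subseteq> V2 - U2"
    using ordered_copy_from_common_link[OF _ _ U2(1)] by blast
  moreover have "V1 - (U1 \<union> S) = V1 - U1 - S" by blast
  ultimately show ?thesis using S(1) inv' by auto
qed

lemma packing_Suc:
  assumes j: "j < q" and "packing j C U1 U2"
  shows "\<exists>W. packing (Suc j) (C(j := W)) (U1 \<union> W 1) (U2 \<union> (\<Union>l\<in>{2..r}. W l))"
proof -
  have U1: "U1 \<subseteq> V1" "card U1 \<le> j * s 1" and U2: "U2 \<subseteq> V2" "card U2 \<le> j * D"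
    and inv: "enough_L j (V1 - U1)"
    and copies: "\<forall>i<j. ordered_copy r s H V1 V2 (C i) \<and> (\<Union>l\<in>{1..r}. C i l) \<subseteq> U1 \<union> U2"
    and disjoint: "\<forall>i<j. \<forall>i'<j. i \<noteq> i' \<longrightarrow> (\<Union>l\<in>{1..r}. C i l) \<inter> (\<Union>l\<in>{1..r}. C i' l) = {}"
    using assms(2) by (auto simp: packing_def)
  obtain W where W: "ordered_copy r s H V1 V2 W" "W 1 \<subseteq> V1 - U1" "\<forall>l\<in>{2..r}. W l \<subseteq> V2 - U2"
    and inv': "enough_L (Suc j) (V1 - (U1 \<union> W 1))"
    using fresh_copy_exists[OF j U1 U2 inv] by blast
  have card_W: "\<forall>l\<in>{1..r}. card (W l) = s l" using W(1) by (simp add: ordered_copy_def)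
  have "{1..r} = insert 1 {2..r}" using r_ge_2 by auto
  then have vertices_W: "(\<Union>l\<in>{1..r}. W l) = W 1 \<union> (\<Union>l\<in>{2..r}. W l)" by simp
  have fresh: "(\<Union>l\<in>{1..r}. W l) \<inter> (U1 \<union> U2) = {}"
    using vertices_W W(2,3) U1(1) U2(1) disjoint_V1_V2 by blast
  have "(\<lambda>i. \<Union>l\<in>{1..r}. (C(j := W)) i l) = (\<lambda>i. \<Union>l\<in>{1..r}. C i l)(j := \<Union>l\<in>{1..r}. W l)"
    by (rule ext) simp
  then have "\<forall>i<Suc j. \<forall>i'<Suc j. i \<noteq> i' \<longrightarrow>
      (\<Union>l\<in>{1..r}. (C(j := W)) i l) \<inter> (\<Union>l\<in>{1..r}. (C(j := W)) i' l) = {}"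
    using disjoint_fun_upd_fresh[OF disjoint _ fresh] copies by (metis (no_types, lifting))
  moreover have "\<forall>i<Suc j. ordered_copy r s H V1 V2 ((C(j := W)) i)
      \<and> (\<Union>l\<in>{1..r}. (C(j := W)) i l) \<subseteq> (U1 \<union> W 1) \<union> (U2 \<union> (\<Union>l\<in>{2..r}. W l))"
    using copies W(1) vertices_W by (auto simp: less_Suc_eq)
  moreover have "card (U1 \<union> W 1) \<le> Suc j * s 1"
    using card_Un_le[of U1 "W 1"] U1(2) card_W r_ge_2 by simp
  moreover have "card (U2 \<union> (\<Union>l\<in>{2..r}. W l)) \<le> Suc j * D"
  proof -
    have "card (\<Union>l\<in>{2..r}. W l) \<le> (\<Sum>l=2..r. card (W l))" by (rule card_UN_le) simp
    also have "\<dots> = D" unfolding D_def using card_W by (intro sum.cong) auto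
    finally show ?thesis using card_Un_le[of U2 "\<Union>l\<in>{2..r}. W l"] U2(2) by simp
  qed
  moreover have "U1 \<union> W 1 \<subseteq> V1" "U2 \<union> (\<Union>l\<in>{2..r}. W l) \<subseteq> V2"
    using U1(1) U2(1) W(2,3) by auto
  ultimately show ?thesis using inv' unfolding packing_def by (intro exI[of _ W]) simp
qed

lemma ordered_copy_packing:
  "\<exists>C. (\<forall>j<q. ordered_copy r s H V1 V2 (C j)) \<and>
    (\<forall>j<q. \<forall>k<q. j \<noteq> k \<longrightarrow> (\<Union>i\<in>{1..r}. C j i) \<inter> (\<Union>i\<in>{1..r}. C k i) = {})"
proof -
  have "\<exists>C U1 U2. packing j C U1 U2" if "j \<le> q" for j
    using that
  proof (induction j)
    case 0
    have "packing 0 (\<lambda>_ _. {}) {} {}" by (simp add: packing_def enough_L_def L_def)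
    then show ?case by blast
  next
    case (Suc j)
    then obtain C U1 U2 where "packing j C U1 U2" by auto
    then show ?case using packing_Suc[of j C U1 U2] Suc.prems by auto
  qed
  then obtain C U1 U2 where "packing q C U1 U2" by blast
  then show ?thesis by (auto simp: packing_def)
qed

end

theorem lemma5p2:
  fixes r :: nat and s :: "nat \<Rightarrow> nat" and \<alpha> :: real
  assumes "r \<ge> 2"
    and "s 1 \<ge> 2"
    and "\<forall>i\<in>{1..<r}. s i \<le> s (Suc i)"
    and "\<alpha> > 0"
  shows "\<exists>n0::nat. \<forall>n\<ge>n0. \<forall>(H :: nat set set) V1 V2 m.
    semibipartite r H V1 V2 \<and> card V1 = m \<and> card V2 = n \<and>
    real m \<le> \<alpha> * real n / (8 * (real (\<Sum>i=1..r. s i) - real (s 1))) \<and>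
    (\<forall>v\<in>V1. real (hdeg H v) \<ge> \<alpha> * real n ^ (r - 1)) \<and>
    real (card {v \<in> V1. real (hdeg H v) \<ge>
        real (n choose (r - 1)) - \<alpha> * real n ^ (r - 1) / (2 * real (s 1))})
      \<ge> min (5 * real (s 1) * (real (s 1) - 1) / \<alpha>) ((real (s 1) - 1) / real (s 1) * real m)
    \<longrightarrow> (\<exists>C :: nat \<Rightarrow> nat \<Rightarrow> nat set.
          (\<forall>j < m div s 1. ordered_copy r s H V1 V2 (C j)) \<and>
          (\<forall>j < m div s 1. \<forall>k < m div s 1. j \<noteq> k \<longrightarrow>
             (\<Union>i\<in>{1..r}. C j i) \<inter> (\<Union>i\<in>{1..r}. C k i) = {}))"
proof -
  have "0 < link_density \<alpha> (s 1)" using assms(4) by (rule link_density_pos)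
  from partite_supersaturation[OF _ this, of "{2..r}" s]
  obtain N where N: "\<forall>n\<ge>N. \<forall>(X :: nat set) F. finite X \<longrightarrow> card X \<le> n \<longrightarrow>
      F \<subseteq> {e. e \<subseteq> X \<and> card e = r - 1} \<longrightarrow>
      link_density \<alpha> (s 1) * real n ^ (r - 1) \<le> real (card F) \<longrightarrow> (\<exists>W. partite_copy {2..r} s X F W)"
    by auto
  have packing: "\<exists>C :: nat \<Rightarrow> nat \<Rightarrow> nat set.
      (\<forall>j < m div s 1. ordered_copy r s H V1 V2 (C j)) \<and>
      (\<forall>j < m div s 1. \<forall>k < m div s 1. j \<noteq> k \<longrightarrow> (\<Union>i\<in>{1..r}. C j i) \<inter> (\<Union>i\<in>{1..r}. C k i) = {})"
    if "max N 1 \<le> n" "semibipartite r H V1 V2" "card V1 = m" "card V2 = n"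
      "real m \<le> \<alpha> * real n / (8 * (real (\<Sum>i=1..r. s i) - real (s 1)))"
      "\<forall>v\<in>V1. real (hdeg H v) \<ge> \<alpha> * real n ^ (r - 1)"
      "real (card {v \<in> V1. real (hdeg H v) \<ge>
          real (n choose (r - 1)) - \<alpha> * real n ^ (r - 1) / (2 * real (s 1))})
        \<ge> min (5 * real (s 1) * (real (s 1) - 1) / \<alpha>) ((real (s 1) - 1) / real (s 1) * real m)"
    for n and H :: "nat set set" and V1 V2 m
  proof -
    interpret semibipartite_setting r s \<alpha> H V1 V2 n
      using assms(1,2,4) that by unfold_locales auto
    interpret copy_packing_setting r s \<alpha> H V1 V2 n m
      using that N by unfold_locales (auto simp: L_def)
    show ?thesis using ordered_copy_packing by (simp add: q_def)
  qed
  show ?thesis by (intro exI[of _ "max N 1"] allI impI) (use packing in blast)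
qed

end
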